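(* Let $A_1,\dots,A_m\in\mathbb{R}^{n\times n}$ be real symmetric matrices and fix $t\ge1$. The map sending an ordered orthogonal simultaneous block decomposition $(V_1,\dots,V_t)$ of $A_1,\dots,A_m$ to $(\epsilon_1,\dots,\epsilon_t)$, where $\epsilon_j$ is the orthogonal projection of $\mathbb{R}^n$ onto $V_j$, is a bijection onto the set of ordered complete sets of $t$ orthogonal idempotents $(\epsilon_1,\dots,\epsilon_t)$ of $Z(A_1,\dots,A_m)$ in which every $\epsilon_j$ is symmetric ($\epsilon_j^T=\epsilon_j$). In particular, there exist an orthogonal matrix $Q\in\mathrm{O}_n(\mathbb{R})$ and positive integers $n_1,\dots,n_t$ with $\sum_j n_j=n$ such that every $Q^TA_iQ$ is block diagonal with diagonal blocks of sizes $n_1,\dots,n_t$ if and only if $Z(A_1,\dots,A_m)$ contains a complete set of $t$ orthogonal idempotents all of which are symmetric matrices.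
   Context: The center is $Z(A_1,\dots,A_m)=\{X\in\mathbb{R}^{n\times n} : (A_iX)^T=A_iX \text{ for all } i\}$. An ordered orthogonal simultaneous block decomposition of length $t$ of $A_1,\dots,A_m$ is a $t$-tuple $(V_1,\dots,V_t)$ of nonzero subspaces of $\mathbb{R}^n$, pairwise orthogonal with respect to the standard inner product, with $\mathbb{R}^n=V_1\oplus\cdots\oplus V_t$ and $x^TA_iy=0$ for all $i$, all $j\neq l$, $x\in V_j$, $y\in V_l$. An ordered complete set of $t$ orthogonal idempotents of $Z(A_1,\dots,A_m)$ is a $t$-tuple of nonzero matrices $\epsilon_1,\dots,\epsilon_t\in Z(A_1,\dots,A_m)$ with $\epsilon_j^2=\epsilon_j$, $\epsilon_j\epsilon_l=0$ for $j\neq l$, and $\sum_j\epsilon_j=I_n$. *)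

theory Defs
  imports "HOL-Analysis.Analysis"
begin

text \<open>Matrices in R^(n x n) are modelled as real^'n^'n for a finite index type 'n
  (n = CARD('n)). The family A_1..A_m is a function A :: nat => matrix, used for i < m.
  Tuples of length t are lists of length t.\<close>

definition center :: "(nat \<Rightarrow> real^'n^'n) \<Rightarrow> nat \<Rightarrow> (real^'n^'n) set" where
  "center A m = {X. \<forall>i<m. transpose (A i ** X) = A i ** X}"

definition is_oosbd :: "(nat \<Rightarrow> real^'n^'n) \<Rightarrow> nat \<Rightarrow> nat \<Rightarrow> (real^'n) set list \<Rightarrow> bool" where
  "is_oosbd A m t Vs \<longleftrightarrow>
     length Vs = t \<and>
     (\<forall>j<t. subspace (Vs!j) \<and> Vs!j \<noteq> {0}) \<and>
     (\<forall>j<t. \<forall>l<t. j \<noteq> l \<longrightarrow> (\<forall>x\<in>Vs!j. \<forall>y\<in>Vs!l. x \<bullet> y = 0)) \<and>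
     (\<forall>v. \<exists>xs. (\<forall>j<t. xs j \<in> Vs!j) \<and> v = (\<Sum>j<t. xs j)) \<and>
     (\<forall>xs. (\<forall>j<t. xs j \<in> Vs!j) \<and> (\<Sum>j<t. xs j) = 0 \<longrightarrow> (\<forall>j<t. xs j = 0)) \<and>
     (\<forall>i<m. \<forall>j<t. \<forall>l<t. j \<noteq> l \<longrightarrow> (\<forall>x\<in>Vs!j. \<forall>y\<in>Vs!l. x \<bullet> (A i *v y) = 0))"

definition is_orth_proj :: "(real^'n) set \<Rightarrow> real^'n^'n \<Rightarrow> bool" where
  "is_orth_proj V P \<longleftrightarrow> (\<forall>x. P *v x \<in> V \<and> (\<forall>y\<in>V. (x - P *v x) \<bullet> y = 0))"

definition orth_proj :: "(real^'n) set \<Rightarrow> real^'n^'n" where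
  "orth_proj V = (THE P. is_orth_proj V P)"

definition is_complete_orth_idems :: "(nat \<Rightarrow> real^'n^'n) \<Rightarrow> nat \<Rightarrow> nat \<Rightarrow> (real^'n^'n) list \<Rightarrow> bool" where
  "is_complete_orth_idems A m t es \<longleftrightarrow>
     length es = t \<and>
     (\<forall>j<t. es!j \<in> center A m \<and> es!j \<noteq> 0 \<and> es!j ** es!j = es!j) \<and>
     (\<forall>j<t. \<forall>l<t. j \<noteq> l \<longrightarrow> es!j ** es!l = 0) \<and>
     (\<Sum>j<t. es!j) = mat 1"

definition idx_pos :: "'n::{finite,linorder} \<Rightarrow> nat" where
  "idx_pos k = card {k'. k' < k}"

text \<open>Block (0-based) containing index k, for block sizes ns:
  the j with sum(ns[0..j-1]) <= pos k < sum(ns[0..j]).\<close>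
definition block_of :: "nat list \<Rightarrow> 'n::{finite,linorder} \<Rightarrow> nat" where
  "block_of ns k = (LEAST j. idx_pos k < sum_list (take (Suc j) ns))"

definition block_diagonal :: "nat list \<Rightarrow> ((real, 'n::{finite,linorder}) vec, 'n::{finite,linorder}) vec \<Rightarrow> bool" where
  "block_diagonal ns M \<longleftrightarrow> (\<forall>k l. block_of ns k \<noteq> block_of ns l \<longrightarrow> M $ k $ l = 0)"

end

theory Submission
  imports Defs
begin

text \<open>Orthogonal projections onto the V_j of an orthogonal decomposition are symmetric idempotents
  e_j with e_j e_l = 0 for j \<noteq> l and \<Sum>e_j = 1, and e \<mapsto> range e inverts this. For symmetric A_i
  and X, "A_i X is symmetric" just says that X commutes with A_i; and e_j commutes with A_i exactly
  when all off-diagonal blocks e_j A_i e_l vanish, i.e. when A_i V_l is orthogonal to V_j.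
  Concatenated orthonormal bases of the V_j form the columns of Q; conversely, conjugating the
  coordinate block projections by Q gives the idempotents.\<close>

subsection \<open>Orthogonal projections\<close>

lemma inner_matrix_vector_transpose:
  fixes M :: "real^'n^'n"
  shows "u \<bullet> (M *v w) = (transpose M *v u) \<bullet> w"
  by (simp add: dot_lmul_matrix[symmetric])

lemma symmetric_if_self_adjoint:
  fixes P :: "real^'n^'n"
  assumes "\<And>x y. (P *v x) \<bullet> y = x \<bullet> (P *v y)"
  shows "transpose P = P"
proof -
  have "transpose P *v x = P *v x" for x
  proof -
    have "(transpose P *v x - P *v x) \<bullet> y = 0" for y
      using assms[of x y] by (simp add: inner_diff_left inner_matrix_vector_transpose)
    then show ?thesis
      by (metis inner_eq_zero_iff right_minus_eq)
  qed
  then show ?thesis by (simp add: matrix_eq)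
qed

lemma is_orth_proj_fixes:
  assumes "is_orth_proj V P" "subspace V" "x \<in> V"
  shows "P *v x = x"
proof -
  have "x - P *v x \<in> V"
    using assms by (simp add: is_orth_proj_def subspace_diff)
  then have "(x - P *v x) \<bullet> (x - P *v x) = 0"
    using assms(1) unfolding is_orth_proj_def by blast
  then show ?thesis by simp
qed

lemma is_orth_proj_unique:
  assumes "subspace V" "is_orth_proj V P" "is_orth_proj V P'"
  shows "P = P'"
proof -
  have "P *v x = P' *v x" for x
  proof -
    have d: "P *v x - P' *v x \<in> V"
      using assms by (simp add: is_orth_proj_def subspace_diff)
    have "P *v x - P' *v x = (x - P' *v x) - (x - P *v x)" by simp
    then have "(P *v x - P' *v x) \<bullet> (P *v x - P' *v x) = 0"
      using assms(2,3) d unfolding is_orth_proj_def by (metis inner_diff_left diff_self)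
    then show ?thesis by simp
  qed
  then show ?thesis by (simp add: matrix_eq)
qed

lemma is_orth_proj_exists:
  fixes V :: "(real^'n) set"
  assumes "subspace V"
  shows "\<exists>P. is_orth_proj V P"
proof -
  obtain B where B: "B \<subseteq> V" "pairwise orthogonal B" "\<And>x. x \<in> B \<Longrightarrow> norm x = 1"
      "independent B" "span B = V"
    using orthonormal_basis_subspace[OF assms] by metis
  have fin: "finite B" using B(4) independent_imp_finite by blast
  define f where "f x = (\<Sum>b\<in>B. (b \<bullet> x) *\<^sub>R b)" for x :: "real^'n"
  have "linear f"
    by (rule linearI) (simp_all add: f_def inner_add_right scaleR_add_left sum.distrib scaleR_sum_right)
  then have Pf: "matrix f *v x = f x" for x by (simp add: matrix_works)
  have "orthogonal (x - f x) b" if "b \<in> B" for x b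
  proof -
    have "f x \<bullet> b = (\<Sum>c\<in>B. if c = b then b \<bullet> x else 0)"
      unfolding f_def inner_sum_left
    proof (rule sum.cong)
      fix c assume "c \<in> B"
      then show "((c \<bullet> x) *\<^sub>R c) \<bullet> b = (if c = b then b \<bullet> x else 0)"
        using B(2,3) that by (auto simp: pairwise_def orthogonal_def norm_eq_1)
    qed simp
    also have "\<dots> = b \<bullet> x" using fin that by simp
    finally have "b \<bullet> f x = b \<bullet> x" by (simp add: inner_commute)
    then show ?thesis by (simp add: orthogonal_def inner_diff_right inner_commute)
  qed
  then have "orthogonal (x - f x) y" if "y \<in> V" for x y
    using that B(5) orthogonal_to_span by blast
  moreover have "f x \<in> V" for x
    unfolding f_def B(5)[symmetric] by (intro span_sum span_scale span_base)
  ultimately have "is_orth_proj V (matrix f)"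
    unfolding is_orth_proj_def orthogonal_def Pf by blast
  then show ?thesis by blast
qed

lemma is_orth_proj_orth_proj:
  assumes "subspace V" shows "is_orth_proj V (orth_proj V)"
proof -
  have "\<exists>!P. is_orth_proj V P"
    using is_orth_proj_exists[OF assms] is_orth_proj_unique[OF assms] by blast
  then show ?thesis unfolding orth_proj_def by (rule theI')
qed

lemma is_orth_proj_self_adjoint:
  assumes "is_orth_proj V P"
  shows "(P *v x) \<bullet> y = (P *v x) \<bullet> (P *v y)"
proof -
  have "(y - P *v y) \<bullet> (P *v x) = 0"
    using assms unfolding is_orth_proj_def by blast
  then have "(P *v x) \<bullet> (y - P *v y) = 0" by (simp only: inner_commute)
  then show ?thesis by (simp add: inner_diff_right)
qed

lemma is_orth_proj_symmetric:
  assumes "is_orth_proj V P"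
  shows "transpose P = P"
  by (rule symmetric_if_self_adjoint)
    (metis is_orth_proj_self_adjoint[OF assms] inner_commute)

lemma is_orth_proj_idempotent:
  assumes "is_orth_proj V P" "subspace V"
  shows "P ** P = P"
  using is_orth_proj_fixes[OF assms] assms(1)
  by (simp add: matrix_eq is_orth_proj_def flip: matrix_vector_mul_assoc)

lemma is_orth_proj_range:
  assumes "is_orth_proj V P" "subspace V"
  shows "range (\<lambda>x. P *v x) = V"
  using assms is_orth_proj_fixes unfolding is_orth_proj_def by (metis image_subsetI subsetI subset_antisym rangeI)

lemma is_orth_proj_kills_orthogonal:
  assumes "is_orth_proj V P" "\<forall>z\<in>V. y \<bullet> z = 0"
  shows "P *v y = 0"
proof -
  have "y \<bullet> (P *v y) = 0" using assms unfolding is_orth_proj_def by blast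
  then have "(P *v y) \<bullet> (P *v y) = 0"
    using is_orth_proj_self_adjoint[OF assms(1), of y y] by (simp add: inner_commute)
  then show ?thesis by simp
qed

lemma is_orth_proj_range_symmetric_idempotent:
  fixes e :: "real^'n^'n"
  assumes "transpose e = e" "e ** e = e"
  shows "is_orth_proj (range (\<lambda>x. e *v x)) e"
  unfolding is_orth_proj_def
proof (intro allI conjI ballI)
  fix x y assume "y \<in> range (\<lambda>x. e *v x)"
  then obtain w where "y = e *v w" by blast
  then show "(x - e *v x) \<bullet> y = 0"
    using assms inner_matrix_vector_transpose[of "x - e *v x" e w]
    by (simp add: matrix_vector_mult_diff_distrib matrix_vector_mul_assoc)
qed simp

lemma subspace_range_matrix_vector_mult: "subspace (range (\<lambda>x. (e::real^'n^'m) *v x))"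
  using linear_subspace_image[OF matrix_vector_mul_linear[of e] subspace_UNIV] by simp

lemma orth_proj_range_symmetric_idempotent:
  fixes e :: "real^'n^'n"
  assumes "transpose e = e" "e ** e = e"
  shows "orth_proj (range (\<lambda>x. e *v x)) = e"
  using is_orth_proj_unique[OF subspace_range_matrix_vector_mult]
    is_orth_proj_orth_proj[OF subspace_range_matrix_vector_mult]
    is_orth_proj_range_symmetric_idempotent[OF assms] by blast

subsection \<open>Complete sets of symmetric orthogonal idempotents\<close>

lemma matrix_sum_vector_mult:
  "finite S \<Longrightarrow> sum M S *v x = (\<Sum>j\<in>S. M j *v (x::real^'n))"
  by (induction S rule: finite_induct) (simp_all add: matrix_vector_mult_add_rdistrib)

lemma matrix_vector_mult_sum:
  "finite S \<Longrightarrow> (M::real^'n^'m) *v sum f S = (\<Sum>j\<in>S. M *v f j)"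
  by (induction S rule: finite_induct) (simp_all add: matrix_vector_right_distrib)

lemma matrix_mult_sum_right:
  "finite S \<Longrightarrow> (M::real^'n^'m) ** sum N S = (\<Sum>j\<in>S. M ** N j)"
  by (induction S rule: finite_induct) (simp_all add: matrix_add_ldistrib)

lemma matrix_add_rdistrib: "(B + C) ** (A::real^'n^'m) = B ** A + C ** A"
  by (vector matrix_matrix_mult_def sum.distrib[symmetric] field_simps)

lemma matrix_mult_sum_left:
  "finite S \<Longrightarrow> sum N S ** (M::real^'n^'m) = (\<Sum>j\<in>S. N j ** M)"
  by (induction S rule: finite_induct) (simp_all add: matrix_add_rdistrib)

lemma symmetric_in_center_iff:
  assumes "\<forall>i<m. transpose (A i) = A i" "transpose X = X"
  shows "X \<in> center A m \<longleftrightarrow> (\<forall>i<m. X ** A i = A i ** X)"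
  using assms by (auto simp: center_def matrix_transpose_mul)

lemma commute_if_off_diagonal_blocks_zero:
  fixes P :: "nat \<Rightarrow> real^'n^'n"
  assumes "(\<Sum>l<t. P l) = mat 1" "\<And>l. l < t \<Longrightarrow> l \<noteq> j \<Longrightarrow> P j ** M ** P l = 0"
    "\<And>l. l < t \<Longrightarrow> l \<noteq> j \<Longrightarrow> P l ** M ** P j = 0" "j < t"
  shows "P j ** M = M ** P j"
proof -
  have "P j ** M = (\<Sum>l<t. P j ** M ** P l)"
    using assms(1) matrix_mult_sum_right[of "{..<t}" "P j ** M" P] by simp
  also have "\<dots> = P j ** M ** P j"
    using assms(2,4) by (simp add: sum.remove[of "{..<t}" j])
  also have "\<dots> = (\<Sum>l<t. P l ** M ** P j)"
    using assms(3,4) by (simp add: sum.remove[of "{..<t}" j])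
  also have "\<dots> = M ** P j"
    using assms(1) matrix_mult_sum_left[of "{..<t}" P "M ** P j"] by (simp add: matrix_mul_assoc)
  finally show ?thesis .
qed

definition symmetric_complete_orth_idems ::
    "(nat \<Rightarrow> real^'n^'n) \<Rightarrow> nat \<Rightarrow> nat \<Rightarrow> (real^'n^'n) list \<Rightarrow> bool" where
  "symmetric_complete_orth_idems A m t es \<longleftrightarrow>
     is_complete_orth_idems A m t es \<and> (\<forall>j<t. transpose (es!j) = es!j)"

lemma is_oosbdD:
  assumes "is_oosbd A m t Vs"
  shows "length Vs = t"
    and "j < t \<Longrightarrow> subspace (Vs!j)"
    and "j < t \<Longrightarrow> Vs!j \<noteq> {0}"
    and "\<lbrakk>j < t; l < t; j \<noteq> l; x \<in> Vs!j; y \<in> Vs!l\<rbrakk> \<Longrightarrow> x \<bullet> y = 0"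
    and "\<exists>xs. (\<forall>j<t. xs j \<in> Vs!j) \<and> v = (\<Sum>j<t. xs j)"
    and "\<lbrakk>i < m; j < t; l < t; j \<noteq> l; x \<in> Vs!j; y \<in> Vs!l\<rbrakk> \<Longrightarrow> x \<bullet> (A i *v y) = 0"
  using assms unfolding is_oosbd_def by simp_all

lemma is_oosbd_ranges:
  assumes symA: "\<forall>i<m. transpose (A i) = A i"
    and es: "symmetric_complete_orth_idems A m t es"
  shows "is_oosbd A m t (map (\<lambda>e. range (\<lambda>x. e *v x)) es)"
proof -
  have len: "length es = t" and cen: "\<And>j. j < t \<Longrightarrow> es!j \<in> center A m"
    and nz: "\<And>j. j < t \<Longrightarrow> es!j \<noteq> 0" and idem: "\<And>j. j < t \<Longrightarrow> es!j ** es!j = es!j"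
    and orth: "\<And>j l. j < t \<Longrightarrow> l < t \<Longrightarrow> j \<noteq> l \<Longrightarrow> es!j ** es!l = 0"
    and tot: "(\<Sum>j<t. es!j) = mat 1" and sym: "\<And>j. j < t \<Longrightarrow> transpose (es!j) = es!j"
    using es unfolding symmetric_complete_orth_idems_def is_complete_orth_idems_def by auto
  define V where "V j = range (\<lambda>x. es!j *v x)" for j
  have Vs: "map (\<lambda>e. range (\<lambda>x. e *v x)) es = map V [0..<t]"
    using len by (simp add: V_def list_eq_iff_nth_eq)
  have mult: "es!l *v (es!j *v u) = (if j = l then es!j *v u else 0)" if "j < t" "l < t" for j l u
    using orth[of l j] idem[of j] that by (auto simp: matrix_vector_mul_assoc)
  have comm: "es!j ** A i = A i ** es!j" if "j < t" "i < m" for i j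
    using cen[OF that(1)] symmetric_in_center_iff[OF symA sym] that by blast
  have perp: "es!l *v y = 0" if "j < t" "l < t" "j \<noteq> l" "y \<in> V j" for j l y
    using mult that unfolding V_def by auto
  show ?thesis unfolding Vs is_oosbd_def
  proof (intro conjI allI impI ballI)
    show "length (map V [0..<t]) = t" by simp
  next
    fix j assume j: "j < t"
    show "subspace (map V [0..<t] ! j)"
      using j by (simp add: V_def subspace_range_matrix_vector_mult)
    have "\<exists>x. es!j *v x \<noteq> 0" using nz[OF j] by (auto simp: matrix_eq)
    then show "map V [0..<t] ! j \<noteq> {0}" using j by (auto simp: V_def)
  next
    fix j l x y assume jl: "j < t" "l < t" "j \<noteq> l" and "x \<in> map V [0..<t] ! j" "y \<in> map V [0..<t] ! l"
    then have x: "x \<in> V j" and "y \<in> V l" by simp_all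
    then obtain w where "y = es!l *v w" unfolding V_def by blast
    then show "x \<bullet> y = 0"
      using inner_matrix_vector_transpose[of x "es!l" w] sym[OF jl(2)] perp[OF jl x] by simp
  next
    fix v
    show "\<exists>xs. (\<forall>j<t. xs j \<in> map V [0..<t] ! j) \<and> v = (\<Sum>j<t. xs j)"
    proof (intro exI conjI allI impI)
      show "v = (\<Sum>j<t. es!j *v v)"
        using tot matrix_sum_vector_mult[of "{..<t}" "\<lambda>j. es!j" v] by simp
    qed (simp add: V_def)
  next
    fix xs l assume xs: "(\<forall>j<t. xs j \<in> map V [0..<t] ! j) \<and> (\<Sum>j<t. xs j) = 0" and l: "l < t"
    then have "\<forall>j<t. \<exists>u. xs j = es!j *v u" unfolding V_def by auto
    then obtain u where u: "\<And>j. j < t \<Longrightarrow> xs j = es!j *v u j" by metis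
    have "0 = es!l *v (\<Sum>j<t. xs j)" using xs by simp
    also have "\<dots> = (\<Sum>j<t. es!l *v xs j)" by (simp add: matrix_vector_mult_sum)
    also have "\<dots> = xs l"
      using l by (simp add: u mult sum.remove[of "{..<t}" l])
    finally show "xs l = 0" by simp
  next
    fix i j l x y assume i: "i < m" and jl: "j < t" "l < t" "j \<noteq> l"
      and "x \<in> map V [0..<t] ! j" "y \<in> map V [0..<t] ! l"
    then obtain u where u: "x = es!j *v u" and y: "y \<in> V l" unfolding V_def by auto
    have "x \<bullet> (A i *v y) = u \<bullet> (A i *v (es!j *v y))"
      using inner_matrix_vector_transpose[of u "es!j" "A i *v y"] sym[OF jl(1)] comm[OF jl(1) i] u
      by (simp add: inner_commute matrix_vector_mul_assoc)
    also have "\<dots> = 0" using perp[OF jl(2,1) _ y] jl by simp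
    finally show "x \<bullet> (A i *v y) = 0" .
  qed
qed

lemma orth_proj_sum_components:
  assumes Vs: "is_oosbd A m t Vs" and j: "j < t" and xs: "\<forall>l<t. xs l \<in> Vs!l"
  shows "orth_proj (Vs!j) *v (\<Sum>l<t. xs l) = xs j"
proof -
  note P = is_orth_proj_orth_proj[OF is_oosbdD(2)[OF Vs j]]
  have "orth_proj (Vs!j) *v xs l = (if l = j then xs j else 0)" if "l < t" for l
    using is_orth_proj_fixes[OF P is_oosbdD(2)[OF Vs j]] xs that
      is_orth_proj_kills_orthogonal[OF P] is_oosbdD(4)[OF Vs that j] by auto
  then have "(\<Sum>l<t. orth_proj (Vs!j) *v xs l) = xs j"
    using j by (simp add: sum.remove[of "{..<t}" j])
  then show ?thesis by (simp add: matrix_vector_mult_sum)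
qed

lemma symmetric_complete_orth_idems_orth_proj:
  assumes symA: "\<forall>i<m. transpose (A i) = A i" and Vs: "is_oosbd A m t Vs"
  shows "symmetric_complete_orth_idems A m t (map orth_proj Vs)"
proof -
  define P where "P j = orth_proj (Vs!j)" for j
  have len: "length Vs = t" and sub: "\<And>j. j < t \<Longrightarrow> subspace (Vs!j)"
    using is_oosbdD[OF Vs] by simp_all
  have es: "map orth_proj Vs = map P [0..<t]"
    using len by (simp add: P_def list_eq_iff_nth_eq)
  have isP: "is_orth_proj (Vs!j) (P j)" if "j < t" for j
    using is_orth_proj_orth_proj[OF sub[OF that]] by (simp add: P_def)
  have inP: "P j *v x \<in> Vs!j" if "j < t" for j x
    using isP[OF that] unfolding is_orth_proj_def by blast
  have tot: "(\<Sum>j<t. P j) = mat 1"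
    unfolding matrix_eq
  proof
    fix v
    obtain xs where xs: "\<forall>j<t. xs j \<in> Vs!j" "v = (\<Sum>j<t. xs j)"
      using is_oosbdD(5)[OF Vs] by blast
    have "(\<Sum>j<t. P j) *v v = (\<Sum>j<t. P j *v v)" by (simp add: matrix_sum_vector_mult)
    also have "\<dots> = v"
      using orth_proj_sum_components[OF Vs _ xs(1)] xs(2) by (simp add: P_def)
    finally show "(\<Sum>j<t. P j) *v v = mat 1 *v v" by simp
  qed
  have off_diagonal: "P j ** M ** P l = 0"
    if "j < t" "l < t" "j \<noteq> l" "\<And>x y. x \<in> Vs!j \<Longrightarrow> y \<in> Vs!l \<Longrightarrow> x \<bullet> (M *v y) = 0" for j l M
    unfolding matrix_eq
  proof
    fix x
    have "\<forall>z\<in>Vs!j. (M *v (P l *v x)) \<bullet> z = 0"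
      using that(4) inP[OF that(2)] by (simp add: inner_commute)
    then show "(P j ** M ** P l) *v x = 0 *v x"
      using is_orth_proj_kills_orthogonal[OF isP[OF that(1)]]
      by (simp flip: matrix_vector_mul_assoc)
  qed
  have comm: "P j ** A i = A i ** P j" if "i < m" "j < t" for i j
    by (rule commute_if_off_diagonal_blocks_zero[OF tot _ _ that(2)])
      (use that is_oosbdD(6)[OF Vs] off_diagonal in \<open>simp_all\<close>)
  have PP: "P j ** P l = 0" if "j < t" "l < t" "j \<noteq> l" for j l
    using off_diagonal[OF that, of "mat 1"] is_oosbdD(4)[OF Vs that] by simp
  have nz: "P j \<noteq> 0" if j: "j < t" for j
  proof
    assume "P j = 0"
    obtain x where "x \<in> Vs!j" "x \<noteq> 0"
      using is_oosbdD(3)[OF Vs j] subspace_0[OF sub[OF j]] by blast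
    then show False
      using is_orth_proj_fixes[OF isP[OF j] sub[OF j]] \<open>P j = 0\<close> by simp
  qed
  show ?thesis
    unfolding es symmetric_complete_orth_idems_def is_complete_orth_idems_def
    using symmetric_in_center_iff[OF symA is_orth_proj_symmetric[OF isP]] comm nz PP tot
      is_orth_proj_idempotent[OF isP sub] is_orth_proj_symmetric[OF isP]
    by simp
qed

theorem bij_betw_orth_proj_oosbd:
  assumes symA: "\<forall>i<m. transpose (A i) = A i"
  shows "bij_betw (map orth_proj) {Vs. is_oosbd A m t Vs} {es. symmetric_complete_orth_idems A m t es}"
proof (rule bij_betw_byWitness[where f' = "map (\<lambda>e. range (\<lambda>x. e *v x))"])
  show "\<forall>Vs\<in>{Vs. is_oosbd A m t Vs}. map (\<lambda>e. range (\<lambda>x. e *v x)) (map orth_proj Vs) = Vs"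
  proof
    fix Vs assume "Vs \<in> {Vs. is_oosbd A m t Vs}"
    then have "length Vs = t" "\<And>j. j < t \<Longrightarrow> subspace (Vs!j)"
      using is_oosbdD(1,2) by blast+
    then show "map (\<lambda>e. range (\<lambda>x. e *v x)) (map orth_proj Vs) = Vs"
      using is_orth_proj_range[OF is_orth_proj_orth_proj] by (auto simp: list_eq_iff_nth_eq)
  qed
  show "\<forall>es\<in>{es. symmetric_complete_orth_idems A m t es}.
          map orth_proj (map (\<lambda>e. range (\<lambda>x. e *v x)) es) = es"
    by (auto simp: list_eq_iff_nth_eq symmetric_complete_orth_idems_def is_complete_orth_idems_def
        intro!: orth_proj_range_symmetric_idempotent)
  show "map orth_proj ` {Vs. is_oosbd A m t Vs} \<subseteq> {es. symmetric_complete_orth_idems A m t es}"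
    using symmetric_complete_orth_idems_orth_proj[OF symA] by blast
  show "map (\<lambda>e. range (\<lambda>x. e *v x)) ` {es. symmetric_complete_orth_idems A m t es}
          \<subseteq> {Vs. is_oosbd A m t Vs}"
    using is_oosbd_ranges[OF symA] by blast
qed

subsection \<open>Block partitions of a linearly ordered index type\<close>

lemma idx_pos_less_card: "idx_pos (k::'n::{finite,linorder}) < CARD('n)"
  unfolding idx_pos_def by (rule psubset_card_mono) auto

lemma strict_mono_idx_pos: "strict_mono (idx_pos :: 'n::{finite,linorder} \<Rightarrow> nat)"
  unfolding strict_mono_def idx_pos_def by (auto intro!: psubset_card_mono)

lemma range_idx_pos: "range (idx_pos :: 'n::{finite,linorder} \<Rightarrow> nat) = {..<CARD('n)}"
proof (rule card_subset_eq)
  show "range (idx_pos :: 'n \<Rightarrow> nat) \<subseteq> {..<CARD('n)}"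
    using idx_pos_less_card by auto
  show "card (range (idx_pos :: 'n \<Rightarrow> nat)) = card {..<CARD('n)}"
    using card_image[OF strict_mono_imp_inj_on[OF strict_mono_idx_pos]] by simp
qed simp

lemma sum_list_take_mono: "a \<le> b \<Longrightarrow> sum_list (take a ns) \<le> sum_list (take b (ns::nat list))"
  by (metis le_add1 le_add_diff_inverse sum_list_append take_add)

lemma Least_segment_eqI:
  assumes "sum_list (take j ns) \<le> p" "p < sum_list (take (Suc j) (ns::nat list))"
  shows "(LEAST j'. p < sum_list (take (Suc j') ns)) = j"
proof (rule Least_equality)
  fix j' assume "p < sum_list (take (Suc j') ns)"
  then show "j \<le> j'"
    using assms(1) sum_list_take_mono[of "Suc j'" j ns] by (meson not_less_eq_eq order.trans not_le)
qed fact

lemma Least_segment_bounds: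
  assumes "p < sum_list (ns::nat list)"
  defines "j \<equiv> LEAST j'. p < sum_list (take (Suc j') ns)"
  shows "j < length ns" "sum_list (take j ns) \<le> p" "p < sum_list (take (Suc j) ns)"
proof -
  have w: "p < sum_list (take (Suc (length ns - 1)) ns)"
    using assms(1) by (cases ns) simp_all
  show "p < sum_list (take (Suc j) ns)" unfolding j_def using w by (rule LeastI)
  have "j \<le> length ns - 1" unfolding j_def using w by (rule Least_le)
  then show "j < length ns" using assms(1) by (cases ns) auto
  show "sum_list (take j ns) \<le> p"
  proof (cases j)
    case (Suc j')
    then have "\<not> p < sum_list (take (Suc j') ns)" unfolding j_def by (metis lessI not_less_Least)
    then show ?thesis using Suc by simp
  qed simp
qed

definition block_offset :: "nat list \<Rightarrow> 'n::{finite,linorder} \<Rightarrow> nat" where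
  "block_offset ns k = idx_pos k - sum_list (take (block_of ns k) ns)"

lemma block_of_bounds:
  assumes "sum_list ns = CARD('n::{finite,linorder})"
  shows "block_of ns (k::'n) < length ns"
    and "sum_list (take (block_of ns k) ns) \<le> idx_pos k"
    and "block_offset ns k < ns ! block_of ns k"
proof -
  have p: "idx_pos k < sum_list ns" using idx_pos_less_card[of k] assms by simp
  note bounds = Least_segment_bounds[OF p, folded block_of_def]
  show "block_of ns k < length ns" "sum_list (take (block_of ns k) ns) \<le> idx_pos k"
    using bounds(1,2) .
  show "block_offset ns k < ns ! block_of ns k"
    using bounds unfolding block_offset_def by (simp add: take_Suc_conv_app_nth)
qed

lemma block_of_offset_inject:
  assumes "sum_list ns = CARD('n::{finite,linorder})"
    and "block_of ns k = block_of ns l" "block_offset ns k = block_offset ns (l::'n)"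
  shows "k = l"
proof -
  have "idx_pos k = idx_pos l"
    using assms block_of_bounds(2)[OF assms(1)] unfolding block_offset_def
    by (metis le_add_diff_inverse)
  then show ?thesis using strict_mono_imp_inj_on[OF strict_mono_idx_pos] by (auto dest: injD)
qed

lemma block_of_surj:
  assumes "sum_list ns = CARD('n::{finite,linorder})" "j < length ns" "ns ! j > 0"
  shows "\<exists>k::'n. block_of ns k = j"
proof -
  let ?p = "sum_list (take j ns)"
  have s: "sum_list (take (Suc j) ns) = ?p + ns ! j"
    using assms(2) by (simp add: take_Suc_conv_app_nth)
  have "sum_list (take (Suc j) ns) \<le> sum_list ns"
    using sum_list_take_mono[of "Suc j" "length ns" ns] assms(2) by simp
  then have "?p \<in> range (idx_pos :: 'n \<Rightarrow> nat)"
    unfolding range_idx_pos using s assms(1,3) by simp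
  then obtain k :: 'n where k: "idx_pos k = ?p" by (metis rangeE)
  have "block_of ns k = j"
    unfolding block_of_def k by (rule Least_segment_eqI) (use s assms(3) in simp_all)
  then show ?thesis by blast
qed

subsection \<open>From a block diagonalization to idempotents\<close>

definition block_indicator :: "('n::finite \<Rightarrow> nat) \<Rightarrow> nat \<Rightarrow> real^'n^'n" where
  "block_indicator bl j = (\<chi> a b. if a = b \<and> bl a = j then 1 else 0)"

lemma block_indicator_entry:
  "block_indicator bl j $ a $ b = (if a = b then (if bl a = j then 1 else 0) else 0)"
  by (simp add: block_indicator_def)

lemma block_indicator_mult_left:
  "(block_indicator bl j ** M) $ a $ b = (if bl a = j then M $ a $ b else 0)"
proof -
  have "(block_indicator bl j ** M) $ a $ b = (\<Sum>k\<in>UNIV. block_indicator bl j $ a $ k * M $ k $ b)"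
    by (simp add: matrix_matrix_mult_def)
  also have "\<dots> = (\<Sum>k\<in>UNIV. if a = k then (if bl a = j then M $ k $ b else 0) else 0)"
    by (rule sum.cong) (auto simp: block_indicator_entry)
  also have "\<dots> = (if bl a = j then M $ a $ b else 0)"
    by (subst sum.delta') simp_all
  finally show ?thesis .
qed

lemma block_indicator_mult_right:
  "(M ** block_indicator bl j) $ a $ b = (if bl b = j then M $ a $ b else 0)"
proof -
  have "(M ** block_indicator bl j) $ a $ b = (\<Sum>k\<in>UNIV. M $ a $ k * block_indicator bl j $ k $ b)"
    by (simp add: matrix_matrix_mult_def)
  also have "\<dots> = (\<Sum>k\<in>UNIV. if k = b then (if bl b = j then M $ a $ b else 0) else 0)"
    by (rule sum.cong) (auto simp: block_indicator_entry)
  also have "\<dots> = (if bl b = j then M $ a $ b else 0)"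
    by (subst sum.delta) simp_all
  finally show ?thesis .
qed

lemma block_indicator_mult:
  "block_indicator bl j ** block_indicator bl l = (if j = l then block_indicator bl j else 0)"
  unfolding vec_eq_iff by (auto simp: block_indicator_mult_left block_indicator_entry)

lemma transpose_block_indicator: "transpose (block_indicator bl j) = block_indicator bl j"
  unfolding vec_eq_iff by (simp add: transpose_def block_indicator_def)

lemma sum_block_indicator:
  assumes "\<And>k. bl k < t"
  shows "(\<Sum>j<t. block_indicator bl j) = mat 1"
  unfolding vec_eq_iff using assms by (simp add: block_indicator_def mat_def)

lemma block_indicator_commute:
  assumes "\<And>k l. bl k \<noteq> bl l \<Longrightarrow> M $ k $ l = 0"
  shows "block_indicator bl j ** M = M ** block_indicator bl j"
  unfolding vec_eq_iff using assms by (auto simp: block_indicator_mult_left block_indicator_mult_right)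

lemma orthogonal_conjugate_mult:
  fixes Q X Y :: "real^'n^'n"
  assumes "orthogonal_matrix Q"
  shows "(Q ** X ** transpose Q) ** (Q ** Y ** transpose Q) = Q ** (X ** Y) ** transpose Q"
proof -
  have "transpose Q ** Q = mat 1" using assms by (simp add: orthogonal_matrix_def)
  have "(Q ** X ** transpose Q) ** (Q ** Y ** transpose Q)
      = Q ** X ** (transpose Q ** Q) ** Y ** transpose Q"
    by (simp only: matrix_mul_assoc)
  also have "\<dots> = Q ** (X ** Y) ** transpose Q"
    using \<open>transpose Q ** Q = mat 1\<close> by (simp add: matrix_mul_assoc)
  finally show ?thesis .
qed

lemma orthogonal_conjugate_cancel:
  fixes Q X :: "real^'n^'n"
  assumes "orthogonal_matrix Q"
  shows "transpose Q ** (Q ** X ** transpose Q) ** Q = X"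
    and "Q ** (transpose Q ** X ** Q) ** transpose Q = X"
proof -
  have "transpose Q ** (Q ** X ** transpose Q) ** Q = (transpose Q ** Q) ** X ** (transpose Q ** Q)"
    and "Q ** (transpose Q ** X ** Q) ** transpose Q = (Q ** transpose Q) ** X ** (Q ** transpose Q)"
    by (simp_all only: matrix_mul_assoc)
  then show "transpose Q ** (Q ** X ** transpose Q) ** Q = X"
    and "Q ** (transpose Q ** X ** Q) ** transpose Q = X"
    using assms by (simp_all add: orthogonal_matrix_def)
qed


lemma block_diagonal_conjugate_commute:
  fixes Q M :: "((real, 'n::{finite,linorder}) vec, 'n) vec" and j :: nat
  assumes Q: "orthogonal_matrix Q" and bd: "block_diagonal ns (transpose Q ** M ** Q)"
  defines "E \<equiv> Q ** block_indicator (block_of ns) j ** transpose Q"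
  shows "E ** M = M ** E"
proof -
  define B where "B = transpose Q ** M ** Q"
  define D where "D = block_indicator (block_of ns :: 'n \<Rightarrow> nat) j"
  have M: "M = Q ** B ** transpose Q"
    using orthogonal_conjugate_cancel(2)[OF Q] by (simp add: B_def)
  have "B $ k $ l = 0" if "block_of ns k \<noteq> block_of ns l" for k l
    using bd that unfolding B_def block_diagonal_def by blast
  then have BD: "D ** B = B ** D"
    unfolding D_def by (rule block_indicator_commute)
  have "E ** M = Q ** (D ** B) ** transpose Q"
    unfolding E_def D_def[symmetric] M by (rule orthogonal_conjugate_mult[OF Q])
  also have "\<dots> = (Q ** B ** transpose Q) ** (Q ** D ** transpose Q)"
    unfolding BD by (rule orthogonal_conjugate_mult[OF Q, symmetric])
  also have "\<dots> = M ** E"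
    unfolding E_def D_def[symmetric] M ..
  finally show ?thesis .
qed

lemma symmetric_complete_orth_idems_if_block_diagonal:
  fixes A :: "nat \<Rightarrow> ((real, 'n::{finite,linorder}) vec, 'n) vec"
  assumes symA: "\<forall>i<m. transpose (A i) = A i"
    and Q: "orthogonal_matrix Q" and len: "length ns = t" and pos: "\<forall>j<t. ns!j > 0"
    and sum_ns: "sum_list ns = CARD('n)"
    and bd: "\<forall>i<m. block_diagonal ns (transpose Q ** A i ** Q)"
  shows "symmetric_complete_orth_idems A m t
           (map (\<lambda>j. Q ** block_indicator (block_of ns) j ** transpose Q) [0..<t])"
proof -
  define D where "D = block_indicator (block_of ns :: 'n \<Rightarrow> nat)"
  define E where "E j = Q ** D j ** transpose Q" for j
  have Esym: "transpose (E j) = E j" for j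
    by (simp add: E_def D_def matrix_transpose_mul matrix_mul_assoc transpose_block_indicator)
  have Emult: "E j ** E l = (if j = l then E j else 0)" for j l
    using orthogonal_conjugate_mult[OF Q, of "D j" "D l"] by (simp add: E_def D_def block_indicator_mult)
  have Enz: "E j \<noteq> 0" if j: "j < t" for j
  proof
    assume "E j = 0"
    have "D j = transpose Q ** E j ** Q"
      using orthogonal_conjugate_cancel(1)[OF Q] by (simp add: E_def)
    with \<open>E j = 0\<close> have "D j = 0" by simp
    moreover have "\<exists>k::'n. block_of ns k = j"
      using block_of_surj[OF sum_ns, of j] pos len j by simp
    then obtain k :: 'n where "block_of ns k = j" ..
    ultimately show False
      using block_indicator_entry[of "block_of ns" j k k] by (simp add: D_def)
  qed
  have "(\<Sum>j<t. E j) = Q ** (\<Sum>j<t. D j) ** transpose Q"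
    by (simp add: E_def matrix_mult_sum_left matrix_mult_sum_right)
  also have "(\<Sum>j<t. D j) = mat 1"
    unfolding D_def by (rule sum_block_indicator) (use block_of_bounds(1)[OF sum_ns] len in simp)
  finally have Esum: "(\<Sum>j<t. E j) = mat 1"
    using Q unfolding orthogonal_matrix_def by simp
  have Ecomm: "E j ** A i = A i ** E j" if "i < m" for i j
    unfolding E_def D_def by (rule block_diagonal_conjugate_commute[OF Q]) (use bd that in simp)
  have "map (\<lambda>j. Q ** block_indicator (block_of ns) j ** transpose Q) [0..<t] = map E [0..<t]"
    by (simp add: E_def D_def)
  then show ?thesis
    unfolding symmetric_complete_orth_idems_def is_complete_orth_idems_def
    using symmetric_in_center_iff[OF symA Esym] Ecomm Enz Emult Esym Esum by simp
qed

subsection \<open>From idempotents to a block diagonalization\<close>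

lemma transpose_mult_mult_entry:
  fixes Q M :: "real^'n^'n"
  shows "(transpose Q ** M ** Q) $ k $ l = column k Q \<bullet> (M *v column l Q)"
proof -
  have "(transpose Q ** M ** Q) $ k $ l = (\<Sum>c\<in>UNIV. \<Sum>d\<in>UNIV. Q$d$k * M$d$c * Q$c$l)"
    by (simp add: matrix_matrix_mult_def transpose_def sum_distrib_right)
  also have "\<dots> = (\<Sum>d\<in>UNIV. Q$d$k * (\<Sum>c\<in>UNIV. M$d$c * Q$c$l))"
    by (subst sum.swap) (simp add: sum_distrib_left mult.assoc)
  also have "\<dots> = column k Q \<bullet> (M *v column l Q)"
    by (simp add: column_def inner_vec_def matrix_vector_mult_def)
  finally show ?thesis .
qed

lemma card_orthonormal_spanning:
  fixes S :: "(real^'n) set"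
  assumes "pairwise orthogonal S" "0 \<notin> S" "span S = UNIV"
  shows "card S = CARD('n)"
  using indep_card_eq_dim_span[OF pairwise_orthogonal_independent[OF assms(1,2)]] assms(3)
  by simp

lemma sum_card_orthonormal_bases_oosbd:
  fixes Vs :: "(real^'n) set list"
  assumes Vs: "is_oosbd A m t Vs"
    and sub: "\<And>j. j < t \<Longrightarrow> B j \<subseteq> Vs!j" and pw: "\<And>j. j < t \<Longrightarrow> pairwise orthogonal (B j)"
    and unit: "\<And>j x. j < t \<Longrightarrow> x \<in> B j \<Longrightarrow> norm x = 1"
    and span_B: "\<And>j. j < t \<Longrightarrow> span (B j) = Vs!j" and fin: "\<And>j. j < t \<Longrightarrow> finite (B j)"
  shows "(\<Sum>j<t. card (B j)) = CARD('n)"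
proof -
  have zero: "0 \<notin> B j" if "j < t" for j
    using unit[OF that] by fastforce
  define BB where "BB = (\<Union>j<t. B j)"
  have orth: "orthogonal x y" if "j < t" "l < t" "x \<in> B j" "y \<in> B l" "x \<noteq> y" for j l x y
  proof (cases "j = l")
    case True then show ?thesis using pw[OF that(1)] that by (auto simp: pairwise_def)
  next
    case False
    have "x \<in> Vs!j" "y \<in> Vs!l" using sub that by blast+
    then show ?thesis
      using is_oosbdD(4)[OF Vs that(1,2) False] by (simp add: orthogonal_def)
  qed
  have disj: "B j \<inter> B l = {}" if "j < t" "l < t" "j \<noteq> l" for j l
  proof -
    have "x \<bullet> x = 0" if "x \<in> B j" "x \<in> B l" for x
      using is_oosbdD(4)[OF Vs \<open>j < t\<close> \<open>l < t\<close> \<open>j \<noteq> l\<close>] sub[OF \<open>j < t\<close>] sub[OF \<open>l < t\<close>] that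
      by blast
    then show ?thesis using zero[OF \<open>j < t\<close>] by (metis disjoint_iff inner_eq_zero_iff)
  qed
  have "v \<in> span BB" for v
  proof -
    obtain xs where xs: "\<forall>j<t. xs j \<in> Vs!j" "v = (\<Sum>j<t. xs j)"
      using is_oosbdD(5)[OF Vs] by blast
    have "xs j \<in> span BB" if "j < t" for j
    proof -
      have "span (B j) \<subseteq> span BB" unfolding BB_def using that by (intro span_mono) blast
      then show ?thesis using xs(1) span_B that by blast
    qed
    then show ?thesis
      unfolding xs(2) by (intro span_sum) simp
  qed
  then have "span BB = UNIV" by auto
  moreover have "pairwise orthogonal BB"
    unfolding BB_def pairwise_def using orth by blast
  moreover have "0 \<notin> BB" unfolding BB_def using zero by blast
  ultimately have "card BB = CARD('n)"
    by (intro card_orthonormal_spanning)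
  moreover have "card BB = (\<Sum>j<t. card (B j))"
    unfolding BB_def by (rule card_UN_disjoint) (use fin disj in auto)
  ultimately show ?thesis by simp
qed

lemma oosbd_orthonormal_bases:
  fixes Vs :: "(real^'n) set list"
  assumes Vs: "is_oosbd A m t Vs"
  obtains B where "\<And>j. j < t \<Longrightarrow> B j \<subseteq> Vs!j" "\<And>j. j < t \<Longrightarrow> pairwise orthogonal (B j)"
    "\<And>j x. j < t \<Longrightarrow> x \<in> B j \<Longrightarrow> norm x = 1" "\<And>j. j < t \<Longrightarrow> finite (B j)"
    "\<And>j. j < t \<Longrightarrow> B j \<noteq> {}" "(\<Sum>j<t. card (B j)) = CARD('n)"
proof -
  have "\<forall>j\<in>{..<t}. \<exists>B. B \<subseteq> Vs!j \<and> pairwise orthogonal B \<and> (\<forall>x\<in>B. norm x = 1)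
          \<and> independent B \<and> span B = Vs!j"
  proof
    fix j assume "j \<in> {..<t}"
    then have "subspace (Vs!j)" using is_oosbdD(2)[OF Vs] by simp
    then obtain B where "B \<subseteq> Vs!j" "pairwise orthogonal B" "\<And>x. x \<in> B \<Longrightarrow> norm x = 1"
      "independent B" "card B = dim (Vs!j)" "span B = Vs!j"
      using orthonormal_basis_subspace by metis
    then show "\<exists>B. B \<subseteq> Vs!j \<and> pairwise orthogonal B \<and> (\<forall>x\<in>B. norm x = 1)
          \<and> independent B \<and> span B = Vs!j" by blast
  qed
  from bchoice[OF this] obtain B where
    B: "\<forall>j\<in>{..<t}. B j \<subseteq> Vs!j \<and> pairwise orthogonal (B j) \<and> (\<forall>x\<in>B j. norm x = 1)
          \<and> independent (B j) \<and> span (B j) = Vs!j" ..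
  have sub: "B j \<subseteq> Vs!j" and pw: "pairwise orthogonal (B j)" and unit: "\<forall>x\<in>B j. norm x = 1"
    and ind: "independent (B j)" and span_B: "span (B j) = Vs!j" if "j < t" for j
    using B that by simp_all
  have fin: "finite (B j)" if "j < t" for j
    using ind[OF that] independent_imp_finite by blast
  have ne: "B j \<noteq> {}" if "j < t" for j
    using span_B[OF that] is_oosbdD(3)[OF Vs that] by auto
  show thesis
    by (rule that) (use sub pw unit fin ne sum_card_orthonormal_bases_oosbd[OF Vs sub pw _ span_B fin] in simp_all)
qed

lemma orthogonal_matrix_block_columns:
  fixes Ls :: "(real, 'n::{finite,linorder}) vec list list" and Q :: "((real, 'n) vec, 'n) vec"
  assumes sum_ns: "sum_list (map length Ls) = CARD('n)"
    and dist: "\<And>j. j < length Ls \<Longrightarrow> distinct (Ls!j)"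
    and unit: "\<And>j x. j < length Ls \<Longrightarrow> x \<in> set (Ls!j) \<Longrightarrow> norm x = 1"
    and orth: "\<And>j l x y. j < length Ls \<Longrightarrow> l < length Ls \<Longrightarrow> x \<in> set (Ls!j) \<Longrightarrow> y \<in> set (Ls!l)
                 \<Longrightarrow> (j, x) \<noteq> (l, y) \<Longrightarrow> x \<bullet> y = 0"
  defines "Q \<equiv> \<chi> i k. (Ls ! block_of (map length Ls) k ! block_offset (map length Ls) k) $ i"
  shows "orthogonal_matrix Q" and "column k Q \<in> set (Ls ! block_of (map length Ls) k)"
proof -
  let ?ns = "map length Ls"
  let ?bl = "block_of ?ns :: 'n \<Rightarrow> nat" and ?off = "block_offset ?ns :: 'n \<Rightarrow> nat"
  have bl: "?bl k < length Ls" and off: "?off k < length (Ls ! ?bl k)" for k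
    using block_of_bounds(1,3)[OF sum_ns, of k] by simp_all
  have col: "column k Q = Ls ! ?bl k ! ?off k" for k
    by (simp add: Q_def column_def vec_eq_iff)
  have col_in: "column k Q \<in> set (Ls ! ?bl k)" for k
    unfolding col using off by simp
  then show "column k Q \<in> set (Ls ! ?bl k)" .
  show "orthogonal_matrix Q"
    unfolding orthogonal_matrix_orthonormal_columns
  proof (intro conjI allI impI)
    fix k show "norm (column k Q) = 1" using unit[OF bl col_in] .
  next
    fix k l :: 'n assume "k \<noteq> l"
    have "(?bl k, column k Q) \<noteq> (?bl l, column l Q)"
    proof
      assume eq: "(?bl k, column k Q) = (?bl l, column l Q)"
      then have same: "?bl k = ?bl l" by simp
      then have "Ls ! ?bl l ! ?off k = Ls ! ?bl l ! ?off l"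
        using eq unfolding col by simp
      then have "?off k = ?off l"
        using nth_eq_iff_index_eq[OF dist[OF bl] _ off[of l]] off[of k] same by simp
      then show False
        using block_of_offset_inject[OF sum_ns same] \<open>k \<noteq> l\<close> by blast
    qed
    then show "orthogonal (column k Q) (column l Q)"
      unfolding orthogonal_def using orth[OF bl bl col_in col_in] by blast
  qed
qed

lemma block_diagonalization_if_oosbd:
  fixes A :: "nat \<Rightarrow> ((real, 'n::{finite,linorder}) vec, 'n) vec"
  assumes Vs: "is_oosbd A m t Vs"
  shows "\<exists>Q ns. orthogonal_matrix Q \<and> length ns = t \<and> (\<forall>j<t. ns!j > 0) \<and>
           sum_list ns = CARD('n) \<and> (\<forall>i<m. block_diagonal ns (transpose Q ** A i ** Q))"
proof -
  obtain B where sub: "\<And>j. j < t \<Longrightarrow> B j \<subseteq> Vs!j" and pw: "\<And>j. j < t \<Longrightarrow> pairwise orthogonal (B j)"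
    and unit: "\<And>j x. j < t \<Longrightarrow> x \<in> B j \<Longrightarrow> norm x = 1" and fin: "\<And>j. j < t \<Longrightarrow> finite (B j)"
    and ne: "\<And>j. j < t \<Longrightarrow> B j \<noteq> {}" and card_B: "(\<Sum>j<t. card (B j)) = CARD('n)"
    using oosbd_orthonormal_bases[OF Vs] by blast
  have "\<forall>j\<in>{..<t}. \<exists>L. set L = B j \<and> distinct L"
    using fin finite_distinct_list by blast
  from bchoice[OF this] obtain L where L: "\<forall>j\<in>{..<t}. set (L j) = B j \<and> distinct (L j)" ..
  define Ls where "Ls = map L [0..<t]"
  have len: "length Ls = t" by (simp add: Ls_def)
  have Ls: "set (Ls!j) = B j" "distinct (Ls!j)" "length (Ls!j) = card (B j)" if "j < t" for j
    using L that distinct_card[of "L j"] by (simp_all add: Ls_def)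
  have sum_ns: "sum_list (map length Ls) = CARD('n)"
    using card_B Ls(3) by (simp add: Ls_def interv_sum_list_conv_sum_set_nat atLeast0LessThan)
  have orth: "x \<bullet> y = 0"
    if "j < t" "l < t" "x \<in> B j" "y \<in> B l" "(j, x) \<noteq> (l, y)" for j l x y
  proof (cases "j = l")
    case True then show ?thesis using pw[OF that(1)] that by (auto simp: pairwise_def orthogonal_def)
  next
    case False then show ?thesis using is_oosbdD(4)[OF Vs that(1,2) False] sub that by blast
  qed
  define Q :: "((real, 'n) vec, 'n) vec"
    where "Q = (\<chi> i k. (Ls ! block_of (map length Ls) k ! block_offset (map length Ls) k) $ i)"
  have "distinct (Ls!j)" "\<And>x. x \<in> set (Ls!j) \<Longrightarrow> norm x = 1" if "j < length Ls" for j
    using Ls unit that len by simp_all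
  moreover have "x \<bullet> y = 0" if "j < length Ls" "l < length Ls" "x \<in> set (Ls!j)" "y \<in> set (Ls!l)"
    "(j, x) \<noteq> (l, y)" for j l x y
    using orth Ls(1) that len by simp
  ultimately have Q_orth: "orthogonal_matrix Q"
    and col: "\<And>k. column k Q \<in> set (Ls ! block_of (map length Ls) k)"
    using orthogonal_matrix_block_columns[OF sum_ns, folded Q_def] by blast+
  have col: "column k Q \<in> Vs ! block_of (map length Ls) k" for k
    using col[of k] block_of_bounds(1)[OF sum_ns, of k] Ls(1) sub len by auto
  have "block_diagonal (map length Ls) (transpose Q ** A i ** Q)" if "i < m" for i
    unfolding block_diagonal_def transpose_mult_mult_entry
  proof (intro allI impI)
    fix k l :: 'n assume "block_of (map length Ls) k \<noteq> block_of (map length Ls) l"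
    then show "column k Q \<bullet> (A i *v column l Q) = 0"
      using is_oosbdD(6)[OF Vs that _ _ _ col[of k] col[of l]] block_of_bounds(1)[OF sum_ns] len
      by simp
  qed
  moreover have "\<forall>j<t. map length Ls ! j > 0"
    using Ls(3) ne fin len by (simp add: card_gt_0_iff)
  ultimately show ?thesis
    using Q_orth sum_ns len by (intro exI[of _ Q] exI[of _ "map length Ls"]) simp
qed

theorem mainTheorem5:
  fixes A :: "nat \<Rightarrow> ((real, 'n::{finite,linorder}) vec, 'n::{finite,linorder}) vec" and m t :: nat
  assumes symA: "\<forall>i<m. transpose (A i) = A i"
    and t1: "t \<ge> 1"
  shows "bij_betw (map orth_proj) {Vs. is_oosbd A m t Vs}
           {es. is_complete_orth_idems A m t es \<and> (\<forall>j<t. transpose (es!j) = es!j)}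
       \<and> ((\<exists>Q ns. orthogonal_matrix Q \<and> length ns = t \<and> (\<forall>j<t. ns!j > 0) \<and>
              sum_list ns = CARD('n) \<and>
              (\<forall>i<m. block_diagonal ns (transpose Q ** A i ** Q)))
          \<longleftrightarrow> (\<exists>es. is_complete_orth_idems A m t es \<and> (\<forall>j<t. transpose (es!j) = es!j)))"
proof -
  have "(\<exists>Q ns. orthogonal_matrix Q \<and> length ns = t \<and> (\<forall>j<t. ns!j > 0) \<and>
           sum_list ns = CARD('n) \<and> (\<forall>i<m. block_diagonal ns (transpose Q ** A i ** Q)))
        \<longleftrightarrow> (\<exists>es. symmetric_complete_orth_idems A m t es)"
  proof
    assume "\<exists>Q ns. orthogonal_matrix Q \<and> length ns = t \<and> (\<forall>j<t. ns!j > 0) \<and>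
              sum_list ns = CARD('n) \<and> (\<forall>i<m. block_diagonal ns (transpose Q ** A i ** Q))"
    then show "\<exists>es. symmetric_complete_orth_idems A m t es"
      using symmetric_complete_orth_idems_if_block_diagonal[OF symA] by blast
  next
    assume "\<exists>es. symmetric_complete_orth_idems A m t es"
    then show "\<exists>Q ns. orthogonal_matrix Q \<and> length ns = t \<and> (\<forall>j<t. ns!j > 0) \<and>
              sum_list ns = CARD('n) \<and> (\<forall>i<m. block_diagonal ns (transpose Q ** A i ** Q))"
      using block_diagonalization_if_oosbd[OF is_oosbd_ranges[OF symA]] by blast
  qed
  with bij_betw_orth_proj_oosbd[OF symA, of t] show ?thesis
    unfolding symmetric_complete_orth_idems_def by blast
qed

end
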